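(* Let $n_1>n_2\geq 2$ be integers. Let $X$ consist of the vectors $(j,j,0),(j,j,1)$ for $j\in\{1,\ldots,n_2\}$, the vectors $(n_2+k,1,0),(n_2+k,n_2,1)$ for $k\in\{0,1,\ldots,n_1-n_2-1\}$, and the vector $(n_1,n_2,1)$. Let $\mathcal B$ consist of all $3$-element subsets $\{\alpha_1,\alpha_2,\alpha_3\}\subseteq X$ such that for each coordinate $j\in\{1,2,3\}$ the set $\{\alpha_{1(j)},\alpha_{2(j)},\alpha_{3(j)}\}$ of $j$-th entries has exactly $2$ elements, together with the additional triple $\{(1,1,0),(n_2,1,0),(n_2,n_2,0)\}$. Then the $3$-uniform bi-hypergraph $\mathcal H_{n_1,n_2}=(X,\mathcal B)$ is a one-realization of $\{n_1,n_2\}$.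
   Context: A bi-hypergraph $(X,\mathcal B)$ is a mixed hypergraph whose $\mathcal C$-edges and $\mathcal D$-edges both equal $\mathcal B$. A strict $k$-coloring is a partition of $X$ into exactly $k$ nonempty classes such that every edge of $\mathcal B$ contains two vertices of a common class and two vertices of distinct classes. The feasible set is the set of $k$ admitting a strict $k$-coloring; the chromatic spectrum lists, for $k=1,\ldots,\max$ of the feasible set, the number of strict $k$-colorings (as partitions). A one-realization of a set $S$ is a mixed hypergraph whose feasible set is $S$ and whose chromatic spectrum has all entries in $\{0,1\}$. $\alpha_{l(j)}$ denotes the $j$-th entry of the vector $\alpha_l$. *)

theory Defs
  imports Main
begin

definition is_partition :: "'a set \<Rightarrow> 'a set set \<Rightarrow> bool" where
  "is_partition X P \<longleftrightarrow> (\<forall>A\<in>P. A \<noteq> {} \<and> A \<subseteq> X) \<and> \<Union>P = X \<and>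
     (\<forall>A\<in>P. \<forall>B\<in>P. A \<noteq> B \<longrightarrow> A \<inter> B = {})"

definition strict_coloring ::
  "'a set \<Rightarrow> 'a set set \<Rightarrow> 'a set set \<Rightarrow> 'a set set \<Rightarrow> nat \<Rightarrow> bool" where
  "strict_coloring X C D P k \<longleftrightarrow> is_partition X P \<and> card P = k \<and>
     (\<forall>E\<in>C. \<exists>x\<in>E. \<exists>y\<in>E. x \<noteq> y \<and> (\<exists>A\<in>P. x \<in> A \<and> y \<in> A)) \<and>
     (\<forall>E\<in>D. \<exists>x\<in>E. \<exists>y\<in>E. \<not> (\<exists>A\<in>P. x \<in> A \<and> y \<in> A))"

definition feasible_set :: "'a set \<Rightarrow> 'a set set \<Rightarrow> 'a set set \<Rightarrow> nat set" where
  "feasible_set X C D = {k. \<exists>P. strict_coloring X C D P k}"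

definition spectrum_entry :: "'a set \<Rightarrow> 'a set set \<Rightarrow> 'a set set \<Rightarrow> nat \<Rightarrow> nat" where
  "spectrum_entry X C D k = card {P. strict_coloring X C D P k}"

definition one_realization :: "'a set \<Rightarrow> 'a set set \<Rightarrow> 'a set set \<Rightarrow> nat set \<Rightarrow> bool" where
  "one_realization X C D S \<longleftrightarrow> feasible_set X C D = S \<and>
     (\<forall>k. finite {P. strict_coloring X C D P k} \<and> spectrum_entry X C D k \<in> {0, 1})"

abbreviation bi_one_realization :: "'a set \<Rightarrow> 'a set set \<Rightarrow> nat set \<Rightarrow> bool" where
  "bi_one_realization X B S \<equiv> one_realization X B B S"

type_synonym vec3 = "nat \<times> nat \<times> nat"

definition coord :: "nat \<Rightarrow> vec3 \<Rightarrow> nat" where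
  "coord j v = (if j = 1 then fst v else if j = 2 then fst (snd v) else snd (snd v))"

definition HX :: "nat \<Rightarrow> nat \<Rightarrow> vec3 set" where
  "HX n1 n2 = {(j, j, 0) | j. 1 \<le> j \<and> j \<le> n2} \<union> {(j, j, 1) | j. 1 \<le> j \<and> j \<le> n2}
     \<union> {(n2 + k, 1, 0) | k. k < n1 - n2} \<union> {(n2 + k, n2, 1) | k. k < n1 - n2}
     \<union> {(n1, n2, 1)}"

definition HB :: "nat \<Rightarrow> nat \<Rightarrow> vec3 set set" where
  "HB n1 n2 = {E. E \<subseteq> HX n1 n2 \<and> card E = 3 \<and> (\<forall>j\<in>{1,2,3}. card (coord j ` E) = 2)}
     \<union> {{(1, 1, 0), (n2, 1, 0), (n2, n2, 0)}}"

end

theory Submission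
  imports Defs
begin

text \<open>In a strict coloring of a bi-hypergraph every triple edge contains exactly one
  monochromatic pair, and the edges of H are essentially the triples taking exactly two values in
  each coordinate. Hence the partitions of X by the first coordinate (n1 classes) and by the second
  coordinate (n2 classes) are strict colorings. Conversely, the triangles spanned by a diagonal
  pair (j,j,0), (j,j,1) and a vertex avoiding the value j make every diagonal pair monochromatic
  and separate distinct diagonals. The extra edge then puts (n2,1,0) into the class of exactly one
  of (n2,n2,0) and (1,1,0), and following the remaining triangles, each choice forces the
  partition by the first, respectively the second, coordinate.\<close>

definition same_class :: "'a set set \<Rightarrow> 'a \<Rightarrow> 'a \<Rightarrow> bool" where
  "same_class P x y \<longleftrightarrow> (\<exists>A\<in>P. x \<in> A \<and> y \<in> A)"

lemma is_partitionD:
  assumes "is_partition X P"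
  shows "A \<in> P \<Longrightarrow> A \<noteq> {}" "A \<in> P \<Longrightarrow> A \<subseteq> X" "\<Union>P = X"
    "A \<in> P \<Longrightarrow> B \<in> P \<Longrightarrow> x \<in> A \<Longrightarrow> x \<in> B \<Longrightarrow> A = B"
  using assms unfolding is_partition_def by blast+

lemma same_class_commute: "same_class P x y \<longleftrightarrow> same_class P y x"
  unfolding same_class_def by blast

lemma same_class_trans:
  "is_partition X P \<Longrightarrow> same_class P x y \<Longrightarrow> same_class P y z \<Longrightarrow> same_class P x z"
  unfolding same_class_def by (metis is_partitionD(4))

lemma same_class_refl: "is_partition X P \<Longrightarrow> x \<in> X \<Longrightarrow> same_class P x x"
  unfolding same_class_def by (metis UnionE is_partitionD(3))

lemma partition_eq_image_classes:
  assumes "is_partition X P"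
  shows "P = (\<lambda>x. {y\<in>X. same_class P x y}) ` X"
proof -
  have class_eq: "A = {y\<in>X. same_class P x y}" if "A \<in> P" "x \<in> A" for A x
    using is_partitionD[OF assms] that unfolding same_class_def by blast
  show ?thesis
  proof (intro equalityI subsetI)
    fix A assume A: "A \<in> P"
    then obtain x where x: "x \<in> A" using is_partitionD(1)[OF assms] by blast
    have "x \<in> X" using is_partitionD(2)[OF assms A] x by blast
    then show "A \<in> (\<lambda>x. {y\<in>X. same_class P x y}) ` X"
      using class_eq[OF A x] by (rule rev_image_eqI)
  next
    fix A assume "A \<in> (\<lambda>x. {y\<in>X. same_class P x y}) ` X"
    then obtain x where x: "x \<in> X" "A = {y\<in>X. same_class P x y}" by blast
    obtain A' where "A' \<in> P" "x \<in> A'" using is_partitionD(3)[OF assms] x(1) by blast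
    then show "A \<in> P" using class_eq x(2) by metis
  qed
qed

lemma strict_coloring_iff_same_class:
  "strict_coloring X C D P k \<longleftrightarrow> is_partition X P \<and> card P = k \<and>
     (\<forall>E\<in>C. \<exists>x\<in>E. \<exists>y\<in>E. x \<noteq> y \<and> same_class P x y) \<and>
     (\<forall>E\<in>D. \<exists>x\<in>E. \<exists>y\<in>E. \<not> same_class P x y)"
  unfolding strict_coloring_def same_class_def ..

definition exactly_one3 :: "bool \<Rightarrow> bool \<Rightarrow> bool \<Rightarrow> bool" where
  "exactly_one3 a b c \<longleftrightarrow> (a \<and> \<not> b \<and> \<not> c) \<or> (\<not> a \<and> b \<and> \<not> c) \<or> (\<not> a \<and> \<not> b \<and> c)"

text \<open>Transitivity of lying in a common class rules out two monochromatic pairs.\<close>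
lemma bi_coloring_edge_exactly_one:
  assumes "strict_coloring X B B P k" "{x, y, z} \<in> B" "x \<noteq> y" "y \<noteq> z" "x \<noteq> z"
  shows "exactly_one3 (same_class P x y) (same_class P x z) (same_class P y z)"
proof -
  have part: "is_partition X P"
    and mono: "\<exists>u\<in>{x, y, z}. \<exists>v\<in>{x, y, z}. u \<noteq> v \<and> same_class P u v"
    and bi: "\<exists>u\<in>{x, y, z}. \<exists>v\<in>{x, y, z}. \<not> same_class P u v"
    using assms(1,2) unfolding strict_coloring_iff_same_class by blast+
  have "same_class P x y \<or> same_class P x z \<or> same_class P y z"
    using mono by (auto simp: same_class_commute)
  moreover have "\<not> same_class P x y \<or> \<not> same_class P x z \<or> \<not> same_class P y z"
    using bi by (auto simp: same_class_commute) (auto simp: same_class_def)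
  ultimately show ?thesis
    unfolding exactly_one3_def by (metis same_class_commute same_class_trans[OF part])
qed

definition kernel_partition :: "('a \<Rightarrow> 'b) \<Rightarrow> 'a set \<Rightarrow> 'a set set" where
  "kernel_partition f X = (\<lambda>x. {y\<in>X. f y = f x}) ` X"

lemma is_partition_kernel_partition: "is_partition X (kernel_partition f X)"
  unfolding is_partition_def kernel_partition_def by auto

lemma same_class_kernel_partition:
  "same_class (kernel_partition f X) x y \<longleftrightarrow> x \<in> X \<and> y \<in> X \<and> f x = f y"
  unfolding same_class_def kernel_partition_def by auto

lemma card_kernel_partition: "card (kernel_partition f X) = card (f ` X)"
proof -
  have "kernel_partition f X = (\<lambda>v. {y\<in>X. f y = v}) ` f ` X"
    unfolding kernel_partition_def by auto
  moreover have "inj_on (\<lambda>v. {y\<in>X. f y = v}) (f ` X)"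
    by (rule inj_onI) auto
  ultimately show ?thesis by (simp add: card_image)
qed

lemma partition_eq_kernel_partition:
  assumes "is_partition X P" and "\<And>x y. x \<in> X \<Longrightarrow> y \<in> X \<Longrightarrow> same_class P x y \<longleftrightarrow> f x = f y"
  shows "P = kernel_partition f X"
proof -
  have "P = (\<lambda>x. {y\<in>X. same_class P x y}) ` X" by (rule partition_eq_image_classes[OF assms(1)])
  also have "\<dots> = kernel_partition f X"
    unfolding kernel_partition_def using assms(2) by (intro image_cong) auto
  finally show ?thesis .
qed

lemma strict_coloring_kernel_partition:
  assumes "\<And>E. E \<in> C \<Longrightarrow> E \<subseteq> X" "\<And>E. E \<in> C \<Longrightarrow> \<exists>x\<in>E. \<exists>y\<in>E. x \<noteq> y \<and> f x = f y"
    and "\<And>E. E \<in> D \<Longrightarrow> \<exists>x\<in>E. \<exists>y\<in>E. f x \<noteq> f y"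
  shows "strict_coloring X C D (kernel_partition f X) (card (f ` X))"
proof -
  have "\<exists>x\<in>E. \<exists>y\<in>E. x \<noteq> y \<and> same_class (kernel_partition f X) x y" if "E \<in> C" for E
    using assms(1,2)[OF that] by (auto simp: same_class_kernel_partition)
  moreover have "\<exists>x\<in>E. \<exists>y\<in>E. \<not> same_class (kernel_partition f X) x y" if "E \<in> D" for E
    using assms(3)[OF that] by (auto simp: same_class_kernel_partition)
  ultimately show ?thesis
    unfolding strict_coloring_iff_same_class
    by (simp add: is_partition_kernel_partition card_kernel_partition)
qed

lemma card3_image_card2:
  assumes "card E = 3" "card (f ` E) = 2"
  shows "(\<exists>x\<in>E. \<exists>y\<in>E. x \<noteq> y \<and> f x = f y) \<and> (\<exists>x\<in>E. \<exists>y\<in>E. f x \<noteq> f y)"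
proof
  have "\<not> inj_on f E" using assms by (intro pigeonhole) simp
  then show "\<exists>x\<in>E. \<exists>y\<in>E. x \<noteq> y \<and> f x = f y" unfolding inj_on_def by blast
  obtain u v where "u \<in> f ` E" "v \<in> f ` E" "u \<noteq> v"
    using assms(2) by (metis card_2_iff insertI1 insert_commute)
  then show "\<exists>x\<in>E. \<exists>y\<in>E. f x \<noteq> f y" by blast
qed

lemma one_realization_of_two_colorings:
  assumes "strict_coloring X C D P1 k1" "strict_coloring X C D P2 k2" "k1 \<noteq> k2"
    and "\<And>P k. strict_coloring X C D P k \<Longrightarrow> P = P1 \<or> P = P2"
  shows "one_realization X C D {k1, k2}"
proof -
  have card: "card P = k" if "strict_coloring X C D P k" for P k
    using that by (simp add: strict_coloring_def)
  have colorings: "{P. strict_coloring X C D P k} \<subseteq> {if k = k1 then P1 else P2}" for k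
  proof
    fix P assume "P \<in> {P. strict_coloring X C D P k}"
    then have "P = P1 \<or> P = P2" "card P = k" using assms(4) card by auto
    then show "P \<in> {if k = k1 then P1 else P2}"
      using card[OF assms(1)] card[OF assms(2)] assms(3) by auto
  qed
  have "finite {P. strict_coloring X C D P k}" for k
    using colorings by (rule finite_subset) simp
  moreover have "spectrum_entry X C D k \<le> 1" for k
    unfolding spectrum_entry_def using card_mono[OF _ colorings] by simp
  moreover have "feasible_set X C D = {k1, k2}"
    unfolding feasible_set_def
  proof (intro equalityI subsetI)
    fix k assume "k \<in> {k. \<exists>P. strict_coloring X C D P k}"
    then obtain P where P: "strict_coloring X C D P k" by blast
    then have "P = P1 \<or> P = P2" using assms(4) by blast
    then show "k \<in> {k1, k2}" using card[OF P] card[OF assms(1)] card[OF assms(2)] by auto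
  qed (use assms(1,2) in blast)
  ultimately show ?thesis
    unfolding one_realization_def by (simp add: le_Suc_eq)
qed

lemma mem_HX:
  "(a, b, c) \<in> HX n1 n2 \<longleftrightarrow>
     (1 \<le> a \<and> a \<le> n2 \<and> b = a \<and> c \<le> 1) \<or>
     (n2 \<le> a \<and> a < n1 \<and> (b = 1 \<and> c = 0 \<or> b = n2 \<and> c = 1)) \<or>
     (a, b, c) = (n1, n2, 1)"
proof -
  have "(\<exists>k. a = n2 + k \<and> k < n1 - n2) \<longleftrightarrow> n2 \<le> a \<and> a < n1" by presburger
  then show ?thesis unfolding HX_def by auto
qed

lemma HX_cases:
  assumes "x \<in> HX n1 n2"
  obtains (diag0) j where "1 \<le> j" "j \<le> n2" "x = (j, j, 0)"
    | (diag1) j where "1 \<le> j" "j \<le> n2" "x = (j, j, 1)"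
    | (low) i where "i < n1 - n2" "x = (n2 + i, 1, 0)"
    | (high) i where "i < n1 - n2" "x = (n2 + i, n2, 1)"
    | (corner) "x = (n1, n2, 1)"
  using assms unfolding HX_def by blast

lemma HX_coord_bounds:
  assumes "x \<in> HX n1 n2" "n2 < n1" "1 \<le> n2"
  shows "1 \<le> fst x" "fst x \<le> n1" "1 \<le> fst (snd x)" "fst (snd x) \<le> n2" "snd (snd x) \<le> 1"
  using assms by (cases rule: HX_cases; simp)+

lemma coord_1_image_HX:
  assumes "n2 < n1" "1 \<le> n2"
  shows "coord 1 ` HX n1 n2 = {1..n1}"
proof (intro equalityI subsetI)
  fix v assume "v \<in> coord 1 ` HX n1 n2"
  then show "v \<in> {1..n1}" using HX_coord_bounds assms by (auto simp: coord_def)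
next
  fix v assume v: "v \<in> {1..n1}"
  let ?x = "if v \<le> n2 then (v, v, 0) else if v < n1 then (v, 1, 0) else (n1, n2, 1)"
  have x: "?x \<in> HX n1 n2" "coord 1 ?x = v" using v by (auto simp: mem_HX coord_def)
  show "v \<in> coord 1 ` HX n1 n2"
    by (rule rev_image_eqI[where f = "coord 1", OF x(1) x(2)[symmetric]])
qed

lemma coord_2_image_HX:
  assumes "n2 < n1" "1 \<le> n2"
  shows "coord 2 ` HX n1 n2 = {1..n2}"
proof (intro equalityI subsetI)
  fix v assume "v \<in> coord 2 ` HX n1 n2"
  then show "v \<in> {1..n2}" using HX_coord_bounds assms by (auto simp: coord_def)
next
  fix v assume "v \<in> {1..n2}"
  then have x: "(v, v, 0) \<in> HX n1 n2" "coord 2 (v, v, 0) = v" by (auto simp: mem_HX coord_def)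
  show "v \<in> coord 2 ` HX n1 n2"
    by (rule rev_image_eqI[where f = "coord 2", OF x(1) x(2)[symmetric]])
qed

lemma HB_subset_HX:
  assumes "E \<in> HB n1 n2" "n2 < n1" "1 \<le> n2"
  shows "E \<subseteq> HX n1 n2"
  using assms unfolding HB_def by (auto simp: mem_HX)

lemma HB_card_coord:
  assumes "E \<in> HB n1 n2" "j \<in> {1, 2}" "2 \<le> n2"
  shows "card E = 3" "card (coord j ` E) = 2"
  using assms unfolding HB_def by (auto simp: coord_def card_insert_if)

lemma HB_tripleI:
  assumes "x \<in> HX n1 n2" "y \<in> HX n1 n2" "z \<in> HX n1 n2" "x \<noteq> y" "y \<noteq> z" "x \<noteq> z"
    "card {fst x, fst y, fst z} = 2" "card {fst (snd x), fst (snd y), fst (snd z)} = 2"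
    "card {snd (snd x), snd (snd y), snd (snd z)} = 2"
  shows "{x, y, z} \<in> HB n1 n2"
proof -
  have "card {x, y, z} = 3" using assms(4-6) by (simp add: card_insert_if)
  moreover have "coord j ` {x, y, z} = {coord j x, coord j y, coord j z}" for j by simp
  ultimately show ?thesis using assms unfolding HB_def by (auto simp: coord_def)
qed

context
  fixes n1 n2 :: nat and P :: "vec3 set set" and k :: nat
  assumes n2_less_n1: "n2 < n1" and two_le_n2: "2 \<le> n2"
    and coloring: "strict_coloring (HX n1 n2) (HB n1 n2) (HB n1 n2) P k"
begin

abbreviation sim :: "vec3 \<Rightarrow> vec3 \<Rightarrow> bool" (infix "\<approx>" 50) where
  "x \<approx> y \<equiv> same_class P x y"

lemma coloring_partition: "is_partition (HX n1 n2) P"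
  using coloring by (simp add: strict_coloring_def)

lemma sim_trans: "x \<approx> y \<Longrightarrow> y \<approx> z \<Longrightarrow> x \<approx> z"
  using same_class_trans[OF coloring_partition] .

lemma sim_refl: "x \<in> HX n1 n2 \<Longrightarrow> x \<approx> x"
  using same_class_refl[OF coloring_partition] .

lemma triangle:
  assumes "x \<in> HX n1 n2" "y \<in> HX n1 n2" "z \<in> HX n1 n2" "x \<noteq> y" "y \<noteq> z" "x \<noteq> z"
    "card {fst x, fst y, fst z} = 2" "card {fst (snd x), fst (snd y), fst (snd z)} = 2"
    "card {snd (snd x), snd (snd y), snd (snd z)} = 2"
  shows "exactly_one3 (x \<approx> y) (x \<approx> z) (y \<approx> z)"
  using bi_coloring_edge_exactly_one[OF coloring HB_tripleI[OF assms]] assms(4-6) .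

lemma special_edge_triangle:
  "exactly_one3 ((1,1,0) \<approx> (n2,1,0)) ((1,1,0) \<approx> (n2,n2,0)) ((n2,1,0) \<approx> (n2,n2,0))"
  using two_le_n2 by (intro bi_coloring_edge_exactly_one[OF coloring]) (auto simp: HB_def)

lemma diag_triangle:
  assumes "1 \<le> j" "j \<le> n2" "z \<in> HX n1 n2" "fst z \<noteq> j" "fst (snd z) \<noteq> j"
  shows "exactly_one3 ((j,j,0) \<approx> (j,j,1)) ((j,j,0) \<approx> z) ((j,j,1) \<approx> z)"
proof -
  obtain a b c where z: "z = (a, b, c)" by (cases z)
  have "c = 0 \<or> c = 1" using assms(3) z by (auto simp: mem_HX)
  then show ?thesis
    using assms z n2_less_n1 by (intro triangle) (auto simp: mem_HX card_insert_if)
qed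

lemma low0_triangles:
  "exactly_one3 ((1,1,1) \<approx> (n2,1,0)) ((1,1,1) \<approx> (n2,n2,0)) ((n2,1,0) \<approx> (n2,n2,0))"
  "exactly_one3 ((1,1,0) \<approx> (n2,1,0)) ((1,1,0) \<approx> (n2,n2,1)) ((n2,1,0) \<approx> (n2,n2,1))"
  "exactly_one3 ((1,1,1) \<approx> (n2,1,0)) ((1,1,1) \<approx> (n2,n2,1)) ((n2,1,0) \<approx> (n2,n2,1))"
  using n2_less_n1 two_le_n2 by (intro triangle; auto simp: mem_HX card_insert_if)+

lemma first_last_diag_not_sim: "\<not> (1,1,0) \<approx> (n2,n2,0)"
proof
  assume a1_an: "(1,1,0) \<approx> (n2,n2,0)"
  note b1_c0_an = low0_triangles(1) and a1_c0_bn = low0_triangles(2)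
    and b1_c0_bn = low0_triangles(3)
  have "\<not> (1,1,0) \<approx> (n2,1,0)" "\<not> (n2,1,0) \<approx> (n2,n2,0)"
    using special_edge_triangle a1_an by (auto simp: exactly_one3_def)
  moreover have "\<not> (1,1,1) \<approx> (n2,n2,0)"
    using diag_triangle[of 1 "(n2,n2,0)"] a1_an two_le_n2 by (auto simp: mem_HX exactly_one3_def)
  moreover have "\<not> (1,1,0) \<approx> (n2,n2,1)"
    using diag_triangle[of n2 "(1,1,0)"] a1_an two_le_n2
    by (auto simp: mem_HX exactly_one3_def same_class_commute)
  ultimately have "(1,1,1) \<approx> (n2,1,0)" "(n2,1,0) \<approx> (n2,n2,1)"
    using b1_c0_an a1_c0_bn by (auto simp: exactly_one3_def)
  then show False using b1_c0_bn sim_trans by (auto simp: exactly_one3_def)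
qed

lemma low0_sim_cases:
  "(n2,1,0) \<approx> (n2,n2,0) \<and> \<not> (n2,1,0) \<approx> (1,1,0) \<or>
   (n2,1,0) \<approx> (1,1,0) \<and> \<not> (n2,1,0) \<approx> (n2,n2,0)"
  using special_edge_triangle first_last_diag_not_sim by (auto simp: exactly_one3_def same_class_commute)

lemma first_last_diag_sim: "(1,1,0) \<approx> (1,1,1)" "(n2,n2,0) \<approx> (n2,n2,1)"
proof -
  note b1_c0_an = low0_triangles(1) and a1_c0_bn = low0_triangles(2)
  have d1: "exactly_one3 ((1,1,0) \<approx> (1,1,1)) ((1,1,0) \<approx> (n2,n2,c)) ((1,1,1) \<approx> (n2,n2,c))"
    if "c \<le> 1" for c
    using diag_triangle[of 1 "(n2,n2,c)"] that two_le_n2 by (simp add: mem_HX)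
  have dn: "exactly_one3 ((n2,n2,0) \<approx> (n2,n2,1)) ((n2,n2,0) \<approx> (1,1,c)) ((n2,n2,1) \<approx> (1,1,c))"
    if "c \<le> 1" for c
    using diag_triangle[of n2 "(1,1,c)"] that two_le_n2 by (simp add: mem_HX)
  have not_a1_an: "\<not> (n2,n2,0) \<approx> (1,1,0)"
    using first_last_diag_not_sim by (simp add: same_class_commute)
  from low0_sim_cases have "(1,1,0) \<approx> (1,1,1) \<and> (n2,n2,0) \<approx> (n2,n2,1)"
  proof (elim disjE conjE)
    assume c0_an: "(n2,1,0) \<approx> (n2,n2,0)" and "\<not> (n2,1,0) \<approx> (1,1,0)"
    then have "\<not> (1,1,1) \<approx> (n2,n2,0)" using b1_c0_an by (simp add: exactly_one3_def)
    then have a1_b1: "(1,1,0) \<approx> (1,1,1)"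
      using d1[of 0] first_last_diag_not_sim by (simp add: exactly_one3_def)
    then have "\<not> (1,1,0) \<approx> (n2,n2,1)" using d1[of 1] by (simp add: exactly_one3_def)
    then have "(n2,1,0) \<approx> (n2,n2,1)"
      using a1_c0_bn \<open>\<not> (n2,1,0) \<approx> (1,1,0)\<close> by (auto simp: exactly_one3_def same_class_commute)
    then have "(n2,n2,0) \<approx> (n2,n2,1)" using c0_an by (metis sim_trans same_class_commute)
    with a1_b1 show ?thesis ..
  next
    assume c0_a1: "(n2,1,0) \<approx> (1,1,0)" and "\<not> (n2,1,0) \<approx> (n2,n2,0)"
    then have "\<not> (n2,1,0) \<approx> (n2,n2,1)" "\<not> (1,1,0) \<approx> (n2,n2,1)"
      using a1_c0_bn by (auto simp: exactly_one3_def same_class_commute)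
    then have an_bn: "(n2,n2,0) \<approx> (n2,n2,1)"
      using dn[of 0] not_a1_an by (auto simp: exactly_one3_def same_class_commute)
    then have "\<not> (n2,n2,0) \<approx> (1,1,1)" using dn[of 1] by (simp add: exactly_one3_def)
    then have "(1,1,1) \<approx> (n2,1,0)"
      using b1_c0_an \<open>\<not> (n2,1,0) \<approx> (n2,n2,0)\<close> by (auto simp: exactly_one3_def same_class_commute)
    then have "(1,1,0) \<approx> (1,1,1)" using c0_a1 by (metis sim_trans same_class_commute)
    with an_bn show ?thesis by simp
  qed
  then show "(1,1,0) \<approx> (1,1,1)" "(n2,n2,0) \<approx> (n2,n2,1)" by simp_all
qed

lemma diag_sim:
  assumes "1 \<le> j" "j \<le> n2"
  shows "(j,j,0) \<approx> (j,j,1)"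
proof (cases "j = 1")
  case True
  then show ?thesis using first_last_diag_sim by simp
next
  case False
  have "exactly_one3 ((1,1,0) \<approx> (1,1,1)) ((1,1,0) \<approx> (j,j,c)) ((1,1,1) \<approx> (j,j,c))"
    if "c \<le> 1" for c
    using diag_triangle[of 1 "(j,j,c)"] that assms False by (simp add: mem_HX)
  moreover have "exactly_one3 ((j,j,0) \<approx> (j,j,1)) ((j,j,0) \<approx> (1,1,0)) ((j,j,1) \<approx> (1,1,0))"
    using diag_triangle[of j "(1,1,0)"] assms False two_le_n2 by (simp add: mem_HX)
  ultimately show ?thesis
    using first_last_diag_sim(1) by (fastforce simp: exactly_one3_def same_class_commute)
qed

lemma diag_not_sim:
  assumes "1 \<le> j" "j \<le> n2" "z \<in> HX n1 n2" "fst z \<noteq> j" "fst (snd z) \<noteq> j"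
  shows "\<not> (j,j,0) \<approx> z"
  using diag_triangle[OF assms] diag_sim[OF assms(1,2)] by (simp add: exactly_one3_def)

lemma diag_not_sim_diag:
  assumes "1 \<le> i" "i \<le> n2" "1 \<le> j" "j \<le> n2" "i \<noteq> j"
  shows "\<not> (i,i,0) \<approx> (j,j,0)"
  using diag_not_sim[of i "(j,j,0)"] assms by (simp add: mem_HX)

lemma low_high_triangles:
  assumes "1 \<le> i" "n2 + i < n1"
  shows "exactly_one3 ((n2+i,1,0) \<approx> (n2,1,0)) ((n2+i,1,0) \<approx> (n2,n2,1)) ((n2,1,0) \<approx> (n2,n2,1))"
    "exactly_one3 ((n2+i,1,0) \<approx> (n2,1,0)) ((n2+i,1,0) \<approx> (n2+i,n2,1)) ((n2,1,0) \<approx> (n2+i,n2,1))"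
    "exactly_one3 ((n2+i,n2,1) \<approx> (n2,n2,1)) ((n2+i,n2,1) \<approx> (n2,1,0)) ((n2,n2,1) \<approx> (n2,1,0))"
  using assms two_le_n2 by (intro triangle; auto simp: mem_HX card_insert_if)+

lemma corner_triangle:
  "exactly_one3 ((n1,n2,1) \<approx> (n2,1,0)) ((n1,n2,1) \<approx> (n2,n2,0)) ((n2,1,0) \<approx> (n2,n2,0))"
  using n2_less_n1 two_le_n2 by (intro triangle) (auto simp: mem_HX card_insert_if)

subsection \<open>First case: the classes are the fibres of the first coordinate\<close>

lemma low_sim_high:
  assumes "(n2,1,0) \<approx> (n2,n2,0)" "1 \<le> i" "n2 + i < n1"
  shows "(n2+i,1,0) \<approx> (n2+i,n2,1)"
proof -
  have "(n2,1,0) \<approx> (n2,n2,1)" using assms(1) first_last_diag_sim(2) by (rule sim_trans)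
  then show ?thesis
    using low_high_triangles[OF assms(2,3)] by (auto simp: exactly_one3_def same_class_commute)
qed

lemma low_not_sim:
  assumes "(n2,1,0) \<approx> (n2,n2,0)" "1 \<le> i" "n2 + i < n1"
    and "x \<in> HX n1 n2" "fst x \<noteq> n2 + i" "fst (snd x) = 1 \<or> fst (snd x) = n2"
  shows "\<not> (n2+i,1,0) \<approx> x"
proof -
  obtain a b c where x: "x = (a, b, c)" by (cases x)
  have "c = 0 \<or> c = 1" using assms(4) x by (auto simp: mem_HX)
  then have "exactly_one3 ((n2+i,1,0) \<approx> (n2+i,n2,1)) ((n2+i,1,0) \<approx> x) ((n2+i,n2,1) \<approx> x)"
    using assms x two_le_n2 by (intro triangle) (auto simp: mem_HX card_insert_if)
  then show ?thesis using low_sim_high[OF assms(1-3)] by (simp add: exactly_one3_def)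
qed

definition first_rep :: "nat \<Rightarrow> vec3" where
  "first_rep v = (if v \<le> n2 then (v, v, 0) else if v < n1 then (v, 1, 0) else (n1, n2, 1))"

lemma sim_first_rep:
  assumes "(n2,1,0) \<approx> (n2,n2,0)" "x \<in> HX n1 n2"
  shows "x \<approx> first_rep (fst x)"
  using assms(2)
proof (cases rule: HX_cases)
  case (diag0 j)
  then show ?thesis using sim_refl assms(2) by (simp add: first_rep_def)
next
  case (diag1 j)
  then show ?thesis using diag_sim by (simp add: first_rep_def same_class_commute)
next
  case (low i)
  then show ?thesis
    using assms(1) sim_refl[OF assms(2)] by (cases "i = 0") (auto simp: first_rep_def)
next
  case (high i)
  then show ?thesis
    using low_sim_high[OF assms(1), of i] diag_sim[of n2] two_le_n2
    by (cases "i = 0") (auto simp: first_rep_def same_class_commute)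
next
  case corner
  then show ?thesis using sim_refl assms(2) n2_less_n1 by (simp add: first_rep_def)
qed

lemma first_rep_not_sim:
  assumes c0_an: "(n2,1,0) \<approx> (n2,n2,0)" and uv: "1 \<le> u" "u < v" "v \<le> n1"
  shows "\<not> first_rep u \<approx> first_rep v"
proof -
  consider "v \<le> n2" | "u \<le> n2" "n2 < v" "v < n1" | "u \<le> n2" "v = n1" | "n2 < u"
    using uv by linarith
  then show ?thesis
  proof cases
    case 1
    then show ?thesis using diag_not_sim_diag[of u v] uv by (simp add: first_rep_def)
  next
    case 2
    then have "\<not> (u,u,0) \<approx> (v,1,0)"
      using low_not_sim[OF c0_an, of "v - n2" "(1,1,0)"] diag_not_sim[of u "(v,1,0)"] uv
      by (cases "u = 1") (auto simp: mem_HX same_class_commute)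
    then show ?thesis using 2 by (simp add: first_rep_def)
  next
    case 3
    have "\<not> (n1,n2,1) \<approx> (n2,n2,0)"
      using corner_triangle c0_an by (simp add: exactly_one3_def same_class_commute)
    then have "\<not> (u,u,0) \<approx> (n1,n2,1)"
      using diag_not_sim[of u "(n1,n2,1)"] 3 uv n2_less_n1
      by (cases "u = n2") (auto simp: mem_HX same_class_commute)
    then show ?thesis using 3 n2_less_n1 by (simp add: first_rep_def)
  next
    case 4
    have "first_rep v \<in> HX n1 n2" "fst (first_rep v) = v"
      "fst (snd (first_rep v)) = 1 \<or> fst (snd (first_rep v)) = n2"
      using 4 uv by (auto simp: first_rep_def mem_HX)
    then have "\<not> (u,1,0) \<approx> first_rep v"
      using low_not_sim[OF c0_an, of "u - n2" "first_rep v"] 4 uv by simp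
    then show ?thesis using 4 uv by (simp add: first_rep_def)
  qed
qed

lemma sim_iff_fst_eq:
  assumes "(n2,1,0) \<approx> (n2,n2,0)" "x \<in> HX n1 n2" "y \<in> HX n1 n2"
  shows "x \<approx> y \<longleftrightarrow> fst x = fst y"
proof
  assume "fst x = fst y"
  then show "x \<approx> y"
    using sim_first_rep[OF assms(1,2)] sim_first_rep[OF assms(1,3)]
    by (metis sim_trans same_class_commute)
next
  assume "x \<approx> y"
  then have "first_rep (fst x) \<approx> first_rep (fst y)"
    using sim_first_rep[OF assms(1,2)] sim_first_rep[OF assms(1,3)]
    by (metis sim_trans same_class_commute)
  moreover have "1 \<le> fst x" "fst x \<le> n1" "1 \<le> fst y" "fst y \<le> n1"
    using HX_coord_bounds assms(2,3) n2_less_n1 two_le_n2 by simp_all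
  ultimately show "fst x = fst y"
    using first_rep_not_sim[OF assms(1)] by (metis linorder_neqE_nat same_class_commute)
qed

subsection \<open>Second case: the classes are the fibres of the second coordinate\<close>

lemma low_sim_low0:
  assumes c0_a1: "(n2,1,0) \<approx> (1,1,0)" and i: "1 \<le> i" "n2 + i < n1"
  shows "(n2+i,1,0) \<approx> (n2,1,0)" "\<not> (n2,1,0) \<approx> (n2,n2,1)"
proof -
  show c0_bn: "\<not> (n2,1,0) \<approx> (n2,n2,1)"
    using c0_a1 first_last_diag_not_sim first_last_diag_sim(2) by (metis sim_trans same_class_commute)
  have "\<not> (n2,n2,0) \<approx> (n2+i,1,0)"
    using diag_not_sim[of n2 "(n2+i,1,0)"] i two_le_n2 by (simp add: mem_HX)
  then have "\<not> (n2+i,1,0) \<approx> (n2,n2,1)"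
    using first_last_diag_sim(2) by (metis sim_trans same_class_commute)
  then show "(n2+i,1,0) \<approx> (n2,1,0)"
    using low_high_triangles(1)[OF i] c0_bn by (simp add: exactly_one3_def)
qed

lemma sim_diag_of_snd:
  assumes c0_a1: "(n2,1,0) \<approx> (1,1,0)" and x: "x \<in> HX n1 n2"
  shows "x \<approx> (fst (snd x), fst (snd x), 0)"
  using x
proof (cases rule: HX_cases)
  case (diag0 j)
  then show ?thesis using sim_refl x by simp
next
  case (diag1 j)
  then show ?thesis using diag_sim by (simp add: same_class_commute)
next
  case (low i)
  show ?thesis
  proof (cases "i = 0")
    case True
    then show ?thesis using low c0_a1 by simp
  next
    case False
    then have "(n2+i,1,0) \<approx> (n2,1,0)" using low low_sim_low0(1)[OF c0_a1, of i] by simp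
    then show ?thesis using sim_trans[OF _ c0_a1] low by simp
  qed
next
  case (high i)
  show ?thesis
  proof (cases "i = 0")
    case True
    then show ?thesis using high first_last_diag_sim(2) by (simp add: same_class_commute)
  next
    case False
    then have i: "1 \<le> i" "n2 + i < n1" using high by auto
    then have "\<not> (n2,1,0) \<approx> (n2+i,n2,1)"
      using low_high_triangles(2)[OF i] low_sim_low0(1)[OF c0_a1 i] by (simp add: exactly_one3_def)
    then have "(n2+i,n2,1) \<approx> (n2,n2,1)"
      using low_high_triangles(3)[OF i] low_sim_low0(2)[OF c0_a1 i]
      by (simp add: exactly_one3_def same_class_commute)
    then show ?thesis
      using high first_last_diag_sim(2) by (metis sim_trans same_class_commute fst_conv snd_conv)
  qed
next
  case corner
  have "\<not> (1,1,0) \<approx> (n1,n2,1)"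
    using diag_not_sim[of 1 "(n1,n2,1)"] n2_less_n1 two_le_n2 by (simp add: mem_HX)
  then have "\<not> (n1,n2,1) \<approx> (n2,1,0)" using c0_a1 by (metis sim_trans same_class_commute)
  moreover have "\<not> (n2,1,0) \<approx> (n2,n2,0)"
    using c0_a1 first_last_diag_not_sim by (metis sim_trans same_class_commute)
  ultimately show ?thesis using corner_triangle corner by (simp add: exactly_one3_def)
qed

lemma sim_iff_snd_eq:
  assumes "(n2,1,0) \<approx> (1,1,0)" "x \<in> HX n1 n2" "y \<in> HX n1 n2"
  shows "x \<approx> y \<longleftrightarrow> fst (snd x) = fst (snd y)"
proof
  assume "fst (snd x) = fst (snd y)"
  then show "x \<approx> y"
    using sim_diag_of_snd[OF assms(1,2)] sim_diag_of_snd[OF assms(1,3)]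
    by (metis sim_trans same_class_commute)
next
  assume "x \<approx> y"
  then have "(fst (snd x), fst (snd x), 0) \<approx> (fst (snd y), fst (snd y), 0)"
    using sim_diag_of_snd[OF assms(1,2)] sim_diag_of_snd[OF assms(1,3)]
    by (metis sim_trans same_class_commute)
  moreover have "1 \<le> fst (snd x)" "fst (snd x) \<le> n2" "1 \<le> fst (snd y)" "fst (snd y) \<le> n2"
    using HX_coord_bounds assms(2,3) n2_less_n1 two_le_n2 by simp_all
  ultimately show "fst (snd x) = fst (snd y)" using diag_not_sim_diag by blast
qed

lemma sim_iff_coord_eq:
  "(\<forall>x\<in>HX n1 n2. \<forall>y\<in>HX n1 n2. x \<approx> y \<longleftrightarrow> coord 1 x = coord 1 y) \<or>
   (\<forall>x\<in>HX n1 n2. \<forall>y\<in>HX n1 n2. x \<approx> y \<longleftrightarrow> coord 2 x = coord 2 y)"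
proof (cases "(n2,1,0) \<approx> (n2,n2,0)")
  case True
  then show ?thesis using sim_iff_fst_eq by (simp add: coord_def)
next
  case False
  then have "(n2,1,0) \<approx> (1,1,0)" using low0_sim_cases by blast
  then show ?thesis using sim_iff_snd_eq by (simp add: coord_def)
qed

end

lemma strict_coloring_HX_coord:
  assumes j: "j \<in> {1, 2}" and "n2 < n1" "2 \<le> n2"
  shows "strict_coloring (HX n1 n2) (HB n1 n2) (HB n1 n2)
    (kernel_partition (coord j) (HX n1 n2)) (card (coord j ` HX n1 n2))"
proof -
  have "(\<exists>x\<in>E. \<exists>y\<in>E. x \<noteq> y \<and> coord j x = coord j y) \<and> (\<exists>x\<in>E. \<exists>y\<in>E. coord j x \<noteq> coord j y)"
    if "E \<in> HB n1 n2" for E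
    using card3_image_card2 HB_card_coord[OF that j assms(3)] by blast
  then show ?thesis
    using HB_subset_HX assms by (intro strict_coloring_kernel_partition) auto
qed

theorem lemma2p2:
  fixes n1 n2 :: nat
  assumes "n1 > n2" and "n2 \<ge> 2"
  shows "bi_one_realization (HX n1 n2) (HB n1 n2) {n1, n2}"
proof (rule one_realization_of_two_colorings)
  show "strict_coloring (HX n1 n2) (HB n1 n2) (HB n1 n2) (kernel_partition (coord 1) (HX n1 n2)) n1"
    using strict_coloring_HX_coord[of 1] coord_1_image_HX assms by simp
  show "strict_coloring (HX n1 n2) (HB n1 n2) (HB n1 n2) (kernel_partition (coord 2) (HX n1 n2)) n2"
    using strict_coloring_HX_coord[of 2] coord_2_image_HX assms by simp
  show "n1 \<noteq> n2" using assms by simp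
  fix P k
  assume P: "strict_coloring (HX n1 n2) (HB n1 n2) (HB n1 n2) P k"
  then have "is_partition (HX n1 n2) P" by (simp add: strict_coloring_def)
  with sim_iff_coord_eq[OF assms P]
  show "P = kernel_partition (coord 1) (HX n1 n2) \<or> P = kernel_partition (coord 2) (HX n1 n2)"
    using partition_eq_kernel_partition by blast
qed

end
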